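(* Let $1/2<c<1$ be a constant, let $r,s$ be positive integers with $s\le cr$, let $0<\delta<1$, and let $t=O\left(\frac{r\log(n/r)+\log(1/\delta)}{\log(1/c)}\right)$ (for a suitable absolute constant in the $O$). Consider a random $t\times n$ $0$-$1$ matrix $M$ whose entries are independent with $M_{i,j}=1$ with probability $1/r$. Then, with probability at least $1-\delta$, $M$ is an $(r,s)$-restricted weight one $t\times n$-matrix. In particular, there exists an $(r,s)$-restricted weight one $t\times n$-matrix with $t=O\left(\frac{r\log(n/r)}{\log(1/c)}\right)$.
   Context: An $(r,s)$-restricted weight one $t\times n$-matrix is a $t\times n$ matrix $M$ with entries in $\{0,1\}$ such that for every $r$ distinct columns $j_1,\dots,j_r\in[n]$ there are $s$ rows $i_1,\dots,i_s\in[t]$ for which the vectors $(M_{i_k,j_1},\dots,M_{i_k,j_r})$, $k=1,\dots,s$, are $s$ distinct vectors of Hamming weight one. Logarithms are base 2. *)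

theory Defs
  imports "HOL-Probability.Probability"
begin

definition restricted_weight_one ::
  "nat \<Rightarrow> nat \<Rightarrow> nat \<Rightarrow> nat \<Rightarrow> (nat \<Rightarrow> nat \<Rightarrow> nat) \<Rightarrow> bool" where
  "restricted_weight_one r s t n M \<longleftrightarrow>
     (\<forall>i<t. \<forall>j<n. M i j \<in> {0, 1}) \<and>
     (\<forall>J. J \<subseteq> {..<n} \<and> card J = r \<longrightarrow>
        (\<exists>I. I \<subseteq> {..<t} \<and> card I = s \<and>
             (\<forall>i\<in>I. card {j\<in>J. M i j = 1} = 1) \<and>
             inj_on (\<lambda>i. restrict (M i) J) I))"

definition random_matrix :: "nat \<Rightarrow> nat \<Rightarrow> nat \<Rightarrow> (nat \<times> nat \<Rightarrow> bool) pmf" where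
  "random_matrix r t n = Pi_pmf ({..<t} \<times> {..<n}) False (\<lambda>_. bernoulli_pmf (1 / real r))"

definition to_matrix :: "(nat \<times> nat \<Rightarrow> bool) \<Rightarrow> nat \<Rightarrow> nat \<Rightarrow> nat" where
  "to_matrix f = (\<lambda>i j. of_bool (f (i, j)))"

end

theory Submission
  imports Defs
begin

(* Fix r columns J and a set S of fewer than s <= c r of them. A single row has exactly one 1
   on J, and it lies outside S, with probability |J - S| (1/r) (1 - 1/r)^(r-1) >= (1 - c)/e;
   since the rows are independent, all t rows miss this event with probability at most
   (1 - (1 - c)/e)^t. If no pair (J, S) is missed, choosing rows greedily, each isolating a
   column not isolated before, gives s rows whose restrictions to J are distinct vectors of
   weight one. A union bound over the at most (n choose r) 2^r pairs, with
   (n choose r) <= (e n/r)^r and log (1/c) <= 4 (1 - c), bounds the failure probability by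
   delta once t >= 36 (r log (n/r) + log (1/delta)) / log (1/c). *)

lemma Pi_pmf_Times_curry:
  assumes A: "finite A" and B: "finite B"
  shows "map_pmf curry (Pi_pmf (A \<times> B) dflt p)
       = Pi_pmf A (\<lambda>_. dflt) (\<lambda>a. Pi_pmf B dflt (\<lambda>b. p (a, b)))" (is "?L = ?R")
proof (rule pmf_eqI)
  fix g :: "'a \<Rightarrow> 'b \<Rightarrow> 'c"
  have "pmf ?L g = pmf (Pi_pmf (A \<times> B) dflt p) (case_prod g)"
    by (metis case_prod_curry curry_case_prod injI pmf_map_inj')
  also have "\<dots> = pmf ?R g"
  proof (cases "\<forall>a b. (a, b) \<notin> A \<times> B \<longrightarrow> g a b = dflt")
    case True
    have "case_prod g x = dflt" if "x \<notin> A \<times> B" for x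
      using True that by (cases x) auto
    then have "pmf (Pi_pmf (A \<times> B) dflt p) (case_prod g) = (\<Prod>a\<in>A. \<Prod>b\<in>B. pmf (p (a, b)) (g a b))"
      using A B by (simp add: pmf_Pi' prod.cartesian_product case_prod_unfold)
    also have "\<dots> = (\<Prod>a\<in>A. pmf (Pi_pmf B dflt (\<lambda>b. p (a, b))) (g a))"
      using True B by (intro prod.cong refl, subst pmf_Pi') auto
    also have "\<dots> = pmf ?R g"
      using True A by (subst pmf_Pi') (auto simp: fun_eq_iff)
    finally show ?thesis .
  next
    case False
    then obtain a b where ab: "(a, b) \<notin> A \<times> B" "g a b \<noteq> dflt" by blast
    show ?thesis
    proof (cases "a \<in> A")
      case True
      then have "pmf (Pi_pmf B dflt (\<lambda>b. p (a, b))) (g a) = 0"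
        using ab B by (intro pmf_Pi_outside) auto
      then show ?thesis
        using True ab A B by (subst (1 2) pmf_Pi) (auto intro: prod_zero)
    next
      case False
      then show ?thesis
        using ab A B by (subst (1 2) pmf_Pi) (auto simp: fun_eq_iff)
    qed
  qed
  finally show "pmf ?L g = pmf ?R g" .
qed

lemma measure_Pi_pmf_Times_rows:
  assumes "finite A" "finite B"
  shows "measure_pmf.prob (Pi_pmf (A \<times> B) dflt (\<lambda>_. q)) {f. \<forall>a\<in>A. P (\<lambda>b. f (a, b))}
       = measure_pmf.prob (Pi_pmf B dflt (\<lambda>_. q)) {x. P x} ^ card A"
proof -
  have "{f. \<forall>a\<in>A. P (\<lambda>b. f (a, b))} = curry -` Pi A (\<lambda>_. {x. P x})"
    by (auto simp: Pi_def curry_def)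
  then have "measure_pmf.prob (Pi_pmf (A \<times> B) dflt (\<lambda>_. q)) {f. \<forall>a\<in>A. P (\<lambda>b. f (a, b))}
      = measure_pmf.prob (map_pmf curry (Pi_pmf (A \<times> B) dflt (\<lambda>_. q))) (Pi A (\<lambda>_. {x. P x}))"
    by simp
  also have "\<dots> = measure_pmf.prob (Pi_pmf B dflt (\<lambda>_. q)) {x. P x} ^ card A"
    using assms by (simp add: Pi_pmf_Times_curry measure_Pi_pmf_Pi)
  finally show ?thesis .
qed

lemma measure_Pi_bernoulli_singleton:
  assumes A: "finite A" "J \<subseteq> A" and j: "j \<in> J" and p: "0 \<le> p" "p \<le> 1"
  shows "measure_pmf.prob (Pi_pmf A False (\<lambda>_. bernoulli_pmf p)) {x. {j'\<in>J. x j'} = {j}}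
       = p * (1 - p) ^ (card J - 1)"
proof -
  define B where "B j' = (if j' = j then {True} else if j' \<in> J then {False} else UNIV)" for j'
  have event: "{x. {j'\<in>J. x j'} = {j}} = Pi A B"
    using A j unfolding B_def by (auto simp: Pi_def)
  have prob_B: "measure_pmf.prob (bernoulli_pmf p) (B j') =
      (if j' = j then p else if j' \<in> J then 1 - p else 1)" for j'
    using p unfolding B_def by (auto simp: measure_pmf_single)
  have "finite J" using A finite_subset by blast
  have "(\<Prod>j'\<in>A. measure_pmf.prob (bernoulli_pmf p) (B j'))
      = (\<Prod>j'\<in>J. measure_pmf.prob (bernoulli_pmf p) (B j'))"
    using A j prob_B by (intro prod.mono_neutral_right) auto
  also have "\<dots> = p * (\<Prod>j'\<in>J - {j}. 1 - p)"
    using \<open>finite J\<close> j prob_B by (simp add: prod.remove)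
  also have "\<dots> = p * (1 - p) ^ (card J - 1)"
    using \<open>finite J\<close> j by simp
  finally show ?thesis
    using A by (simp add: event measure_Pi_pmf_Pi)
qed

definition unique_one_outside :: "'a set \<Rightarrow> 'a set \<Rightarrow> ('a \<Rightarrow> bool) \<Rightarrow> bool" where
  "unique_one_outside J S x \<longleftrightarrow> (\<exists>j\<in>J - S. {j'\<in>J. x j'} = {j})"

lemma measure_Pi_bernoulli_unique_one_outside:
  assumes A: "finite A" "J \<subseteq> A" and p: "0 \<le> p" "p \<le> 1"
  shows "measure_pmf.prob (Pi_pmf A False (\<lambda>_. bernoulli_pmf p)) {x. unique_one_outside J S x}
       = real (card (J - S)) * (p * (1 - p) ^ (card J - 1))"
proof -
  have "finite J" using A finite_subset by blast
  have "{x. unique_one_outside J S x} = (\<Union>j\<in>J - S. {x. {j'\<in>J. x j'} = {j}})"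
    by (auto simp: unique_one_outside_def)
  then have "measure_pmf.prob (Pi_pmf A False (\<lambda>_. bernoulli_pmf p)) {x. unique_one_outside J S x}
      = (\<Sum>j\<in>J - S. measure_pmf.prob (Pi_pmf A False (\<lambda>_. bernoulli_pmf p)) {x. {j'\<in>J. x j'} = {j}})"
    using \<open>finite J\<close>
    by (simp only:) (rule measure_pmf.finite_measure_finite_Union, auto simp: disjoint_family_on_def)
  also have "\<dots> = (\<Sum>j\<in>J - S. p * (1 - p) ^ (card J - 1))"
    using A p by (intro sum.cong refl measure_Pi_bernoulli_singleton) auto
  finally show ?thesis by simp
qed

lemma exp_minus_one_le_power: "exp (-1) \<le> (1 - 1 / real r) ^ (r - 1)"
proof (cases "r \<le> 1")
  case True
  then show ?thesis by auto
next
  case False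
  define m where "m = r - 1"
  have m: "0 < m" "real r = real m + 1"
    using False unfolding m_def by auto
  have "1 - 1 / real r = 1 / (1 + 1 / real m)"
    using m by (simp add: field_simps)
  then have "(1 - 1 / real r) ^ (r - 1) = 1 / (1 + 1 / real m) ^ m"
    by (simp add: m_def power_one_over)
  also have "1 / exp 1 \<le> 1 / (1 + 1 / real m) ^ m"
    using exp_ge_one_plus_x_over_n_power_n [of m 1] m
    by (intro divide_left_mono mult_pos_pos zero_less_power) (auto intro: add_pos_nonneg)
  finally have "1 / exp 1 \<le> (1 - 1 / real r) ^ (r - 1)" .
  then show ?thesis by (simp add: exp_minus field_simps)
qed

text \<open>With \<open>p = 1/r\<close> and \<open>|J| = r\<close>, each of the \<open>|J - S| \<ge> (1 - c) r\<close> columns is the unique one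
  with probability \<open>(1/r) (1 - 1/r)^(r-1) \<ge> 1/(e r)\<close>.\<close>

lemma measure_Pi_bernoulli_unique_one_outside_ge:
  assumes A: "finite A" "J \<subseteq> A" and J: "card J = r" "0 < r"
    and S: "S \<subseteq> J" "card S < s" and sc: "real s \<le> c * real r"
  shows "(1 - c) / exp 1
       \<le> measure_pmf.prob (Pi_pmf A False (\<lambda>_. bernoulli_pmf (1 / real r))) {x. unique_one_outside J S x}"
proof -
  have "finite J" using A finite_subset by blast
  then have "card S \<le> card J" "finite S"
    using S(1) by (auto intro: card_mono finite_subset)
  then have "real (card (J - S)) = real r - real (card S)"
    using S(1) J by (simp add: card_Diff_subset of_nat_diff)
  also have "\<dots> \<ge> (1 - c) * real r"
    using S sc by (simp add: algebra_simps)
  finally have "1 - c \<le> real (card (J - S)) / real r"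
    using J by (simp add: field_simps)
  then have "(1 - c) * exp (-1) \<le> real (card (J - S)) / real r * (1 - 1 / real r) ^ (r - 1)"
    using exp_minus_one_le_power [of r] by (intro mult_mono) auto
  then show ?thesis
    using A J by (simp add: measure_Pi_bernoulli_unique_one_outside exp_minus field_simps)
qed

lemma prob_no_unique_one_outside_le:
  assumes J: "J \<subseteq> {..<n}" "card J = r" "0 < r"
    and S: "S \<subseteq> J" "card S < s" and sc: "real s \<le> c * real r"
  shows "measure_pmf.prob (random_matrix r t n) {f. \<forall>i<t. \<not> unique_one_outside J S (\<lambda>j. f (i, j))}
       \<le> (1 - (1 - c) / exp 1) ^ t"
proof -
  define row where "row = Pi_pmf {..<n} False (\<lambda>_. bernoulli_pmf (1 / real r))"
  have "measure_pmf.prob (random_matrix r t n) {f. \<forall>i<t. \<not> unique_one_outside J S (\<lambda>j. f (i, j))}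
      = measure_pmf.prob row {x. \<not> unique_one_outside J S x} ^ t"
    using measure_Pi_pmf_Times_rows [of "{..<t}" "{..<n}" False "bernoulli_pmf (1 / real r)"
        "\<lambda>x. \<not> unique_one_outside J S x"]
    by (simp add: random_matrix_def row_def Ball_def flip: lessThan_iff)
  also have "measure_pmf.prob row {x. \<not> unique_one_outside J S x}
      = 1 - measure_pmf.prob row {x. unique_one_outside J S x}"
    using measure_pmf.prob_compl [of "{x. unique_one_outside J S x}" row]
    by (simp add: Compl_eq_Diff_UNIV [symmetric] Collect_neg_eq)
  also have "(\<dots>) ^ t \<le> (1 - (1 - c) / exp 1) ^ t"
    using measure_Pi_bernoulli_unique_one_outside_ge [of "{..<n}" J r S s c] J S sc
    by (intro power_mono) (auto simp: row_def)
  finally show ?thesis .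
qed

lemma greedy_distinct_singletons:
  fixes W :: "'a \<Rightarrow> 'b set"
  assumes hit: "\<And>S. S \<subseteq> J \<Longrightarrow> card S < s \<Longrightarrow> \<exists>i\<in>T. \<exists>j\<in>J - S. W i = {j}"
  shows "\<exists>I\<subseteq>T. card I = s \<and> (\<forall>i\<in>I. \<exists>j\<in>J. W i = {j}) \<and> inj_on W I"
proof -
  have "\<exists>I\<subseteq>T. finite I \<and> card I = k \<and> (\<forall>i\<in>I. \<exists>j\<in>J. W i = {j}) \<and> inj_on W I" if "k \<le> s" for k
    using that
  proof (induction k)
    case 0
    show ?case by auto
  next
    case (Suc k)
    then obtain I where I: "I \<subseteq> T" "finite I" "card I = k" "\<forall>i\<in>I. \<exists>j\<in>J. W i = {j}" "inj_on W I"
      by auto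
    have "card (\<Union>(W ` I)) \<le> (\<Sum>i\<in>I. card (W i))"
      using I(2) by (rule card_UN_le)
    also have "\<dots> = (\<Sum>i\<in>I. 1)"
      using I(4) by (intro sum.cong) auto
    finally have "card (\<Union>(W ` I)) < s"
      using I(3) Suc.prems by simp
    moreover have "\<Union>(W ` I) \<subseteq> J"
      using I(4) by auto
    ultimately obtain i j where ij: "i \<in> T" "j \<in> J - \<Union>(W ` I)" "W i = {j}"
      using hit by blast
    then have "W i \<notin> W ` I" "i \<notin> I"
      by auto
    with I ij show ?case
      by (intro exI [of _ "insert i I"]) auto
  qed
  then show ?thesis by blast
qed

lemma restricted_weight_one_if_unique_one_outside:
  assumes "\<And>J S. J \<subseteq> {..<n} \<Longrightarrow> card J = r \<Longrightarrow> S \<subseteq> J \<Longrightarrow> card S < s \<Longrightarrow>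
             \<exists>i<t. unique_one_outside J S (\<lambda>j. f (i, j))"
  shows "restricted_weight_one r s t n (to_matrix f)"
  unfolding restricted_weight_one_def
proof (intro conjI allI impI)
  fix J assume J: "J \<subseteq> {..<n} \<and> card J = r"
  define W where "W i = {j\<in>J. f (i, j)}" for i
  have "\<exists>i\<in>{..<t}. \<exists>j\<in>J - S. W i = {j}" if S: "S \<subseteq> J" "card S < s" for S
  proof -
    obtain i where "i < t" "unique_one_outside J S (\<lambda>j. f (i, j))"
      using assms [of J S] J S by blast
    then show ?thesis by (auto simp: W_def unique_one_outside_def)
  qed
  then obtain I where I: "I \<subseteq> {..<t}" "card I = s" "\<forall>i\<in>I. \<exists>j\<in>J. W i = {j}" "inj_on W I"
    using greedy_distinct_singletons [of J s "{..<t}" W] by blast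
  have W_eq: "{j\<in>J. to_matrix f i j = 1} = W i" for i
    by (auto simp: W_def to_matrix_def)
  then have "(\<lambda>g. {j\<in>J. g j = 1}) \<circ> (\<lambda>i. restrict (to_matrix f i) J) = W"
    by (auto simp: fun_eq_iff)
  then have "inj_on (\<lambda>i. restrict (to_matrix f i) J) I"
    using I(4) by (intro inj_on_imageI2 [of "\<lambda>g. {j\<in>J. g j = 1}"]) simp
  then show "\<exists>I. I \<subseteq> {..<t} \<and> card I = s \<and> (\<forall>i\<in>I. card {j\<in>J. to_matrix f i j = 1} = 1) \<and>
      inj_on (\<lambda>i. restrict (to_matrix f i) J) I"
    using I W_eq by (intro exI [of _ I]) auto
qed (simp add: to_matrix_def)

lemma card_subset_pairs_le:
  "card (SIGMA J:{J. J \<subseteq> {..<n} \<and> card J = r}. {S. S \<subseteq> J \<and> card S < s}) \<le> (n choose r) * 2 ^ r"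
proof -
  have "card (SIGMA J:{J. J \<subseteq> {..<n} \<and> card J = r}. {S. S \<subseteq> J \<and> card S < s})
      = (\<Sum>J | J \<subseteq> {..<n} \<and> card J = r. card {S. S \<subseteq> J \<and> card S < s})"
    by (intro card_SigmaI) (auto intro: finite_subset [of _ "Pow _"] rev_finite_subset)
  also have "\<dots> \<le> (\<Sum>J | J \<subseteq> {..<n} \<and> card J = r. 2 ^ r)"
  proof (intro sum_mono)
    fix J assume J: "J \<in> {J. J \<subseteq> {..<n} \<and> card J = r}"
    then have "finite J" by (auto intro: finite_subset)
    then have "card {S. S \<subseteq> J \<and> card S < s} \<le> card (Pow J)"
      by (intro card_mono) auto
    then show "card {S. S \<subseteq> J \<and> card S < s} \<le> 2 ^ r"
      using J \<open>finite J\<close> by (simp add: card_Pow)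
  qed
  also have "\<dots> = (n choose r) * 2 ^ r"
    using n_subsets [of "{..<n}" r] by simp
  finally show ?thesis .
qed

lemma prob_not_restricted_weight_one_le:
  assumes r: "0 < r" and sc: "real s \<le> c * real r" and c: "0 \<le> c"
  shows "measure_pmf.prob (random_matrix r t n) {f. \<not> restricted_weight_one r s t n (to_matrix f)}
       \<le> real (n choose r) * 2 ^ r * (1 - (1 - c) / exp 1) ^ t"
proof -
  define Idx where "Idx = (SIGMA J:{J. J \<subseteq> {..<n} \<and> card J = r}. {S. S \<subseteq> J \<and> card S < s})"
  define E :: "nat set \<times> nat set \<Rightarrow> (nat \<times> nat \<Rightarrow> bool) set"
    where "E = (\<lambda>(J, S). {f. \<forall>i<t. \<not> unique_one_outside J S (\<lambda>j. f (i, j))})"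
  define B where "B = (1 - (1 - c) / exp 1) ^ t"
  have "finite Idx"
    unfolding Idx_def by (intro finite_SigmaI) (auto intro: finite_subset [of _ "Pow _"] rev_finite_subset)
  have "{f. \<not> restricted_weight_one r s t n (to_matrix f)} \<subseteq> (\<Union>p\<in>Idx. E p)"
  proof
    fix f assume "f \<in> {f. \<not> restricted_weight_one r s t n (to_matrix f)}"
    then obtain J S where "J \<subseteq> {..<n}" "card J = r" "S \<subseteq> J" "card S < s"
        "\<forall>i<t. \<not> unique_one_outside J S (\<lambda>j. f (i, j))"
      using restricted_weight_one_if_unique_one_outside [of n r s t f] by blast
    then have "(J, S) \<in> Idx" "f \<in> E (J, S)"
      unfolding Idx_def E_def by auto
    then show "f \<in> (\<Union>p\<in>Idx. E p)" by blast
  qed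
  then have "measure_pmf.prob (random_matrix r t n) {f. \<not> restricted_weight_one r s t n (to_matrix f)}
      \<le> measure_pmf.prob (random_matrix r t n) (\<Union>p\<in>Idx. E p)"
    by (intro measure_pmf.finite_measure_mono) auto
  also have "\<dots> \<le> (\<Sum>p\<in>Idx. measure_pmf.prob (random_matrix r t n) (E p))"
    using \<open>finite Idx\<close> by (intro measure_pmf.finite_measure_subadditive_finite) auto
  also have "\<dots> \<le> real (card Idx) * B"
  proof (rule sum_bounded_above)
    fix p assume "p \<in> Idx"
    then obtain J S where "p = (J, S)" "J \<subseteq> {..<n}" "card J = r" "S \<subseteq> J" "card S < s"
      unfolding Idx_def by blast
    then show "measure_pmf.prob (random_matrix r t n) (E p) \<le> B"
      using prob_no_unique_one_outside_le [of J n r S s c t] r sc unfolding E_def B_def by simp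
  qed
  also have "\<dots> \<le> real ((n choose r) * 2 ^ r) * B"
  proof (rule mult_right_mono)
    show "real (card Idx) \<le> real ((n choose r) * 2 ^ r)"
      unfolding Idx_def of_nat_le_iff by (rule card_subset_pairs_le)
    have "(1 - c) / exp 1 \<le> 1"
      using c exp_ge_add_one_self [of 1] by (simp add: field_simps)
    then show "0 \<le> B" unfolding B_def by simp
  qed
  finally show ?thesis unfolding B_def by simp
qed

lemma power_div_fact_le_exp:
  fixes x :: real
  assumes "0 \<le> x"
  shows "x ^ k / fact k \<le> exp x"
proof -
  have "(\<Sum>i\<in>{k}. x ^ i /\<^sub>R fact i) \<le> (\<Sum>i. x ^ i /\<^sub>R fact i)"
    using assms by (intro sum_le_suminf summable_exp_generic) auto
  then show ?thesis by (simp add: exp_def divide_inverse_commute scaleR_conv_of_real)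
qed

lemma binomial_le_exp_pow: "real (n choose k) \<le> (exp 1 * real n / real k) ^ k"
proof -
  have "real (n choose k) * fact k \<le> real n ^ k"
    using binomial_fact_pow [of n k] by (metis of_nat_fact of_nat_le_iff of_nat_mult of_nat_power)
  then have "real (n choose k) \<le> real n ^ k / fact k"
    by (simp add: field_simps)
  also have "\<dots> = (real n / real k) ^ k * (real k ^ k / fact k)"
    by (cases "k = 0") (simp_all add: power_divide)
  also have "\<dots> \<le> (real n / real k) ^ k * exp 1 ^ k"
    using power_div_fact_le_exp [of "real k" k] by (intro mult_left_mono) (simp_all flip: exp_of_nat_mult)
  finally show ?thesis
    by (simp add: power_mult_distrib [symmetric] ac_simps)
qed

lemma log2_inverse_le:
  fixes c :: real
  assumes c: "1/2 \<le> c" "c \<le> 1"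
  shows "log 2 (1 / c) \<le> 4 * (1 - c)"
proof -
  have "ln (1 / c) \<le> 1 / c - 1"
    using c by (intro ln_le_minus_one) auto
  also have "\<dots> = (1 - c) / c"
    using c by (simp add: field_simps)
  also have "\<dots> \<le> (1 - c) / (1 / 2)"
    using c by (intro divide_left_mono) auto
  finally have "ln (1 / c) \<le> 2 * (1 - c)" by simp
  moreover have "1 / 2 \<le> ln (2::real)"
    using ln2_ge_two_thirds by simp
  ultimately have "ln (1 / c) / ln 2 \<le> 2 * (1 - c) / (1 / 2)"
    using c by (intro frac_le) auto
  then show ?thesis
    by (simp add: log_def)
qed

lemma union_bound_le:
  fixes c \<delta> :: real
  assumes c: "1/2 \<le> c" "c < 1" and r: "0 < r" and n: "2 * r \<le> n" and \<delta>: "0 < \<delta>" "\<delta> \<le> 1"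
    and t: "real t \<ge> 36 * (real r * log 2 (real n / real r) + log 2 (1 / \<delta>)) / log 2 (1 / c)"
  shows "real (n choose r) * 2 ^ r * (1 - (1 - c) / exp 1) ^ t \<le> \<delta>"
proof -
  define y where "y = real n / real r"
  define x where "x = log 2 y"
  define L where "L = log 2 (1 / \<delta>)"
  have y: "2 \<le> y" using n r by (simp add: y_def field_simps)
  then have x: "1 \<le> x" by (simp add: x_def)
  have L: "0 \<le> L" using \<delta> by (simp add: L_def)
  have "ln (2 * exp 1 * y) = ln 2 + 1 + x * ln 2"
    using y by (simp add: x_def log_def ln_mult)
  also have "\<dots> \<le> 3 * x"
    using ln_2_less_1 x by (smt (verit) mult_left_le)
  finally have ln_le: "ln (2 * exp 1 * y) \<le> 3 * x" .
  have "real (n choose r) * 2 ^ r \<le> (exp 1 * y) ^ r * 2 ^ r"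
    using binomial_le_exp_pow [of n r] by (simp add: y_def)
  also have "\<dots> = exp (real r * ln (2 * exp 1 * y))"
    using y by (simp add: exp_of_nat_mult power_mult_distrib [symmetric] ac_simps)
  also have "\<dots> \<le> exp (3 * real r * x)"
    using mult_left_mono [OF ln_le, of "real r"] by (simp add: ac_simps)
  finally have choose_le: "real (n choose r) * 2 ^ r \<le> exp (3 * real r * x)" .
  have base: "0 \<le> 1 - (1 - c) / exp 1"
    using c exp_ge_add_one_self [of 1] by (simp add: field_simps)
  then have power_le: "(1 - (1 - c) / exp 1) ^ t \<le> exp (- ((1 - c) / exp 1)) ^ t"
    using exp_ge_add_one_self [of "- ((1 - c) / exp 1)"] by (intro power_mono) auto
  have t_large: "3 * (real r * x + L) \<le> real t * ((1 - c) / exp 1)"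
  proof -
    have l: "0 < log 2 (1 / c)" "log 2 (1 / c) \<le> 4 * (1 - c)"
      using c log2_inverse_le [of c] by auto
    then have "36 * (real r * x + L) \<le> real t * (4 * (1 - c))"
      using t mult_left_mono [OF l(2), of "real t"]
      by (simp add: x_def y_def L_def pos_divide_le_eq)
    moreover have "3 * exp 1 * (real r * x + L) \<le> 9 * (real r * x + L)"
      using exp_le x L by (intro mult_right_mono) auto
    ultimately show ?thesis
      by (simp add: field_simps)
  qed
  have "\<delta> = exp (- (L * ln 2))"
    using \<delta> by (simp add: L_def log_def ln_div)
  then have delta_ge: "exp (- 3 * L) \<le> \<delta>"
    using L ln_2_less_1 mult_left_mono [of "ln 2" 1 L] by simp
  have "real (n choose r) * 2 ^ r * (1 - (1 - c) / exp 1) ^ t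
      \<le> exp (3 * real r * x) * exp (- ((1 - c) / exp 1)) ^ t"
    using choose_le power_le base by (intro mult_mono) auto
  also have "\<dots> = exp (3 * real r * x + real t * (- ((1 - c) / exp 1)))"
    by (simp only: exp_add exp_of_nat_mult)
  also have "\<dots> \<le> exp (- 3 * L)"
    using t_large by (simp add: algebra_simps)
  also note delta_ge
  finally show ?thesis .
qed

lemma prob_restricted_weight_one_ge:
  fixes c \<delta> :: real
  assumes c: "1/2 \<le> c" "c < 1" and r: "0 < r" and sc: "real s \<le> c * real r" and n: "2 * r \<le> n"
    and \<delta>: "0 < \<delta>" "\<delta> \<le> 1"
    and t: "real t \<ge> 36 * (real r * log 2 (real n / real r) + log 2 (1 / \<delta>)) / log 2 (1 / c)"
  shows "1 - \<delta> \<le> measure_pmf.prob (random_matrix r t n) {f. restricted_weight_one r s t n (to_matrix f)}"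
proof -
  have "measure_pmf.prob (random_matrix r t n) (- {f. restricted_weight_one r s t n (to_matrix f)}) \<le> \<delta>"
    using prob_not_restricted_weight_one_le [OF r sc, of t n] union_bound_le [OF c r n \<delta> t] c
    by (simp add: Compl_eq)
  then show ?thesis
    using measure_pmf.prob_compl [of "{f. restricted_weight_one r s t n (to_matrix f)}"]
    by (simp add: Compl_eq_Diff_UNIV)
qed

lemma exists_restricted_weight_one:
  fixes c :: real
  assumes c: "1/2 \<le> c" "c < 1" and r: "0 < r" and sc: "real s \<le> c * real r" and n: "2 * r \<le> n"
  shows "\<exists>t M. real t \<le> 73 * (real r * log 2 (real n / real r)) / log 2 (1 / c)
                \<and> restricted_weight_one r s t n M"
proof -
  define x where "x = log 2 (real n / real r)"
  define l where "l = log 2 (1 / c)"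
  define t where "t = nat \<lceil>36 * (real r * x + 1) / l\<rceil>"
  have x: "1 \<le> real r * x"
    using n r by (intro order_trans [OF _ mult_mono [of 1 "real r" 1 x]]) (auto simp: x_def field_simps)
  have l: "0 < l" "l \<le> 1"
    using c by (auto simp: l_def field_simps)
  have "1/2 \<le> measure_pmf.prob (random_matrix r t n) {f. restricted_weight_one r s t n (to_matrix f)}"
    using prob_restricted_weight_one_ge [OF c r sc n, of "1/2" t]
    by (simp add: t_def x_def l_def) linarith
  then have "{f. restricted_weight_one r s t n (to_matrix f)} \<noteq> {}"
    by (intro notI) simp
  then obtain f where f: "restricted_weight_one r s t n (to_matrix f)"
    by blast
  have "real t \<le> 36 * (real r * x + 1) / l + 1"
    using x l by (simp add: t_def)
  moreover have "36 * (real r * x + 1) / l + 1 = (36 * (real r * x + 1) + l) / l"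
    using l by (simp add: field_simps)
  moreover have "\<dots> \<le> 73 * (real r * x) / l"
    using x l by (intro divide_right_mono) (simp_all add: algebra_simps)
  ultimately have "real t \<le> 73 * (real r * log 2 (real n / real r)) / log 2 (1 / c)"
    unfolding x_def l_def by linarith
  with f show ?thesis
    by blast
qed

theorem lemma7:
  shows "(\<exists>C>0. \<forall>(c::real) (r::nat) (s::nat) (n::nat) (\<delta>::real) (t::nat).
            1/2 < c \<and> c < 1 \<and> 0 < r \<and> 0 < s \<and> real s \<le> c * real r \<and>
            2 * r \<le> n \<and> 0 < \<delta> \<and> \<delta> < 1 \<and>
            real t \<ge> C * (real r * log 2 (real n / real r) + log 2 (1 / \<delta>)) / log 2 (1 / c)
            \<longrightarrow> measure_pmf.prob (random_matrix r t n)
                  {f. restricted_weight_one r s t n (to_matrix f)} \<ge> 1 - \<delta>)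
       \<and> (\<exists>C>0. \<forall>(c::real) (r::nat) (s::nat) (n::nat).
            1/2 < c \<and> c < 1 \<and> 0 < r \<and> 0 < s \<and> real s \<le> c * real r \<and> 2 * r \<le> n
            \<longrightarrow> (\<exists>t M. real t \<le> C * (real r * log 2 (real n / real r)) / log 2 (1 / c) \<and>
                       restricted_weight_one r s t n M))"
proof (rule conjI [OF exI [of _ 36] exI [of _ 73]], safe)
  fix c \<delta> :: real and r s n t :: nat
  assume "1/2 < c" "c < 1" "0 < r" "real s \<le> c * real r" "2 * r \<le> n" "0 < \<delta>" "\<delta> < 1"
    and "real t \<ge> 36 * (real r * log 2 (real n / real r) + log 2 (1 / \<delta>)) / log 2 (1 / c)"
  then show "1 - \<delta> \<le> measure_pmf.prob (random_matrix r t n) {f. restricted_weight_one r s t n (to_matrix f)}"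
    by (intro prob_restricted_weight_one_ge) auto
next
  fix c :: real and r s n :: nat
  assume "1/2 < c" "c < 1" "0 < r" "real s \<le> c * real r" "2 * r \<le> n"
  then show "\<exists>t M. real t \<le> 73 * (real r * log 2 (real n / real r)) / log 2 (1 / c)
                \<and> restricted_weight_one r s t n M"
    by (intro exists_restricted_weight_one) auto
qed simp_all

end
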